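(* For every $n>3$, $\rho_T(P_n)=2$, where $P_n$ is the path on $n$ vertices.
   Context: Graphs are finite and simple. For $u,v\in(\mathbb{R}\cup\{\infty\})^k$ the min-plus tropical dot product is $u\odot v=\min_i(u_i+v_i)$. A min-plus $k$-tropical dot product representation of $G=(V,E)$ is a map $f:V\to(\mathbb{R}\cup\{\infty\})^k$ with a threshold $t>0$ such that for all distinct $x,y\in V$: $xy\in E$ iff $f(x)\odot f(y)\ge t$. $\rho_T(G)$ is the least $k\ge 1$ for which such a representation exists. *)

theory Defs
  imports Complex_Main "HOL-Library.Extended_Real"
begin

text \<open>Vectors in (R u {infinity})^k are modelled as functions nat => ereal, of which only
  the coordinates i < k are relevant, and these are required to be different from -infinity.\<close>

definition trop_dot :: "nat \<Rightarrow> (nat \<Rightarrow> ereal) \<Rightarrow> (nat \<Rightarrow> ereal) \<Rightarrow> ereal" where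
  "trop_dot k u v = Min ((\<lambda>i. u i + v i) ` {..<k})"

definition trop_rep :: "'a set \<Rightarrow> ('a \<Rightarrow> 'a \<Rightarrow> bool) \<Rightarrow> nat \<Rightarrow> ('a \<Rightarrow> nat \<Rightarrow> ereal) \<Rightarrow> real \<Rightarrow> bool" where
  "trop_rep V E k f t \<longleftrightarrow>
     t > 0 \<and>
     (\<forall>x\<in>V. \<forall>i<k. f x i \<noteq> -\<infinity>) \<and>
     (\<forall>x\<in>V. \<forall>y\<in>V. x \<noteq> y \<longrightarrow> (E x y \<longleftrightarrow> trop_dot k (f x) (f y) \<ge> ereal t))"

definition rho_T :: "'a set \<Rightarrow> ('a \<Rightarrow> 'a \<Rightarrow> bool) \<Rightarrow> nat" where
  "rho_T V E = (LEAST k. k \<ge> 1 \<and> (\<exists>f t. trop_rep V E k f t))"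

definition path_adj :: "nat \<Rightarrow> nat \<Rightarrow> bool" where
  "path_adj i j \<longleftrightarrow> i = j + 1 \<or> j = i + 1"

end

theory Submission
  imports Defs
begin

text \<open>In dimension one the tropical dot product is an ordinary sum, so two edges \<open>ab\<close>, \<open>cd\<close>
  give \<open>(a + c) + (b + d) = (a + b) + (c + d) \<ge> 2t\<close>, forcing \<open>ac\<close> or \<open>bd\<close> to be an edge; the
  path \<open>0 1 2 3\<close> violates this.  In dimension two, put \<open>\<sigma>(x) = (-1)^x x\<close> and represent \<open>x\<close> by
  \<open>(1 + \<sigma>(x), 1 - \<sigma>(x))\<close>: the dot product of \<open>x\<close> and \<open>y\<close> is \<open>2 - |\<sigma>(x) + \<sigma>(y)|\<close>, and
  \<open>|\<sigma>(x) + \<sigma>(y)| \<le> 1\<close> holds exactly for neighbours on the path.\<close>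

lemma trop_dot_1: "trop_dot 1 u v = u 0 + v 0"
  unfolding trop_dot_def by (simp add: lessThan_Suc)

lemma trop_dot_2: "trop_dot 2 u v = min (u 0 + v 0) (u 1 + v 1)"
proof -
  have "{..<2::nat} = {0, 1}" by auto
  then show ?thesis unfolding trop_dot_def by (simp add: min.commute)
qed

lemma rho_T_eq_2I:
  assumes "trop_rep V E 2 f t" and "\<And>f t. \<not> trop_rep V E 1 f t"
  shows "rho_T V E = 2"
  unfolding rho_T_def
proof (rule Least_equality)
  show "2 \<ge> (1::nat) \<and> (\<exists>f t. trop_rep V E 2 f t)" using assms(1) by auto
next
  fix k assume "1 \<le> k \<and> (\<exists>f t. trop_rep V E k f t)"
  with assms(2) show "2 \<le> k" by (cases "k = 1") auto
qed

lemma ereal_threshold_exchange: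
  fixes a b c d :: ereal
  assumes "a \<noteq> -\<infinity>" "b \<noteq> -\<infinity>" "c \<noteq> -\<infinity>" "d \<noteq> -\<infinity>"
    and "a + b \<ge> ereal t" "c + d \<ge> ereal t"
  shows "a + c \<ge> ereal t \<or> b + d \<ge> ereal t"
  using assms by (cases a; cases b; cases c; cases d) auto

lemma trop_rep_1_edge_exchange:
  assumes rep: "trop_rep V E 1 f t"
    and V: "a \<in> V" "b \<in> V" "c \<in> V" "d \<in> V" "a \<noteq> b" "c \<noteq> d" "a \<noteq> c" "b \<noteq> d"
    and edges: "E a b" "E c d"
  shows "E a c \<or> E b d"
proof -
  have finite: "f x 0 \<noteq> -\<infinity>" if "x \<in> V" for x
    using rep that unfolding trop_rep_def by auto
  have adj: "E x y \<longleftrightarrow> f x 0 + f y 0 \<ge> ereal t" if "x \<in> V" "y \<in> V" "x \<noteq> y" for x y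
    using rep that unfolding trop_rep_def trop_dot_1 by auto
  have "f a 0 + f c 0 \<ge> ereal t \<or> f b 0 + f d 0 \<ge> ereal t"
    using ereal_threshold_exchange finite adj edges V by simp
  with adj V show ?thesis by blast
qed

lemma path_no_trop_rep_1:
  assumes "n > 3"
  shows "\<not> trop_rep {..<n} path_adj 1 f t"
proof
  assume "trop_rep {..<n} path_adj 1 f t"
  from trop_rep_1_edge_exchange[OF this, of 0 1 2 3] assms
  show False by (simp add: path_adj_def)
qed

definition alt_index :: "nat \<Rightarrow> int" where
  "alt_index x = (if even x then int x else - int x)"

lemma abs_alt_index_add_le_1_iff_path_adj:
  assumes "x \<noteq> y"
  shows "\<bar>alt_index x + alt_index y\<bar> \<le> 1 \<longleftrightarrow> path_adj x y"
proof -
  obtain a where a: "x = 2 * a \<or> x = 2 * a + 1" by (metis dvd_mult_div_cancel odd_two_times_div_two_succ)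
  obtain b where b: "y = 2 * b \<or> y = 2 * b + 1" by (metis dvd_mult_div_cancel odd_two_times_div_two_succ)
  from a b assms show ?thesis
    unfolding alt_index_def path_adj_def by (elim disjE) (simp_all, arith+)
qed

definition path_rep :: "nat \<Rightarrow> nat \<Rightarrow> ereal" where
  "path_rep x i = ereal (if i = 0 then 1 + alt_index x else 1 - alt_index x)"

lemma trop_dot_path_rep:
  "trop_dot 2 (path_rep x) (path_rep y) = ereal (2 - \<bar>alt_index x + alt_index y\<bar>)"
  unfolding trop_dot_2 path_rep_def by (simp add: min_def abs_if)

lemma path_trop_rep_2: "trop_rep V path_adj 2 path_rep 1"
  unfolding trop_rep_def trop_dot_path_rep
  by (auto simp: path_rep_def abs_alt_index_add_le_1_iff_path_adj[symmetric])

theorem mainTheorem17: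
  fixes n :: nat
  assumes "n > 3"
  shows "rho_T {..<n} path_adj = 2"
  using rho_T_eq_2I path_trop_rep_2 path_no_trop_rep_1[OF assms] by blast

end
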